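(* Fix $a\in(0,1/2)$ and $b\in(0,1)$. There exist constants $c_1>0$ and $c_2>0$ (independent of $n$) such that for all sufficiently large $n$ of the form $n=2^{h+1}-1$, the random-neighbor variant process on the full binary tree with $n$ vertices, rooted at its root, satisfies $\Pr[\tau_{\mathrm{conv}}\ge c_2n]\ge c_1a$.
   Context: Random-neighbor variant. Fix $a,b\in[0,1]$, a connected graph $G=(V,E)$ and a root $r$. Labels $f_t:V\to\{+1,-1,\bot\}$ with $f_t(r)=+1$ for all $t$ and $f_0(v)=\bot$ for $v\ne r$. For $t\ge1$ and each $v\neq r$ independently, let $N_{t-1}(v)=\{u:(u,v)\in E,\ f_{t-1}(u)\ne\bot\}$. If $f_{t-1}(v)=\bot$ and $N_{t-1}(v)=\emptyset$, then $f_t(v)=\bot$. If $f_{t-1}(v)=\bot$ and $N_{t-1}(v)\neq\emptyset$, pick $w$ uniformly from $N_{t-1}(v)$ and set $f_t(v)=f_{t-1}(w)$ w.p. $1-a$ and $-f_{t-1}(w)$ w.p. $a$. If $f_{t-1}(v)\ne\bot$, pick $w$ uniformly at random from $N_{t-1}(v)$ (afresh every round) and set $f_t(v)=f_{t-1}(w)$ w.p. $b$ and $f_t(v)=f_{t-1}(v)$ w.p. $1-b$. The convergence time is $\tau_{\mathrm{conv}}=\min\{t: f_t(v)=+1\ \forall v\in V\}$. The full binary tree of height $h$ has $2^{h+1}-1$ vertices; every non-leaf vertex has exactly two children and all leaves are at distance $h$ from the root. *)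

theory Defs
  imports "HOL-Probability.Probability"
begin

datatype label = Pos | Neg | Bot

fun neg_label :: "label \<Rightarrow> label" where
  "neg_label Pos = Neg" | "neg_label Neg = Pos" | "neg_label Bot = Bot"

type_synonym 'v state = "'v \<Rightarrow> label"

text \<open>Graph: finite vertex set V, symmetric edge set E (pairs), root r.
  Labelled neighbours of v in state f.\<close>
definition labelled_nbrs :: "'v set \<Rightarrow> ('v \<times> 'v) set \<Rightarrow> 'v state \<Rightarrow> 'v \<Rightarrow> 'v set" where
  "labelled_nbrs V E f v = {u \<in> V. (u, v) \<in> E \<and> f u \<noteq> Bot}"

definition vertex_update ::
  "'v set \<Rightarrow> ('v \<times> 'v) set \<Rightarrow> 'v \<Rightarrow> real \<Rightarrow> real \<Rightarrow> 'v state \<Rightarrow> 'v \<Rightarrow> label pmf" where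
  "vertex_update V E r a b f v =
     (let N = labelled_nbrs V E f v in
      if v = r then return_pmf Pos
      else if f v = Bot then
        (if N = {} then return_pmf Bot
         else do { w \<leftarrow> pmf_of_set N; flip \<leftarrow> bernoulli_pmf a;
                   return_pmf (if flip then neg_label (f w) else f w) })
      else
        (if N = {} then return_pmf (f v)
         else do { w \<leftarrow> pmf_of_set N; copy \<leftarrow> bernoulli_pmf b;
                   return_pmf (if copy then f w else f v) }))"

definition step ::
  "'v set \<Rightarrow> ('v \<times> 'v) set \<Rightarrow> 'v \<Rightarrow> real \<Rightarrow> real \<Rightarrow> 'v state \<Rightarrow> 'v state pmf" where
  "step V E r a b f = Pi_pmf V Bot (vertex_update V E r a b f)"

definition init_state :: "'v \<Rightarrow> 'v state" where
  "init_state r = (\<lambda>v. if v = r then Pos else Bot)"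

fun traj ::
  "'v set \<Rightarrow> ('v \<times> 'v) set \<Rightarrow> 'v \<Rightarrow> real \<Rightarrow> real \<Rightarrow> nat \<Rightarrow> 'v state list pmf" where
  "traj V E r a b 0 = return_pmf [init_state r]"
| "traj V E r a b (Suc k) =
     traj V E r a b k \<bind> (\<lambda>xs. map_pmf (\<lambda>s. xs @ [s]) (step V E r a b (last xs)))"

definition all_pos :: "'v set \<Rightarrow> 'v state \<Rightarrow> bool" where
  "all_pos V f \<longleftrightarrow> (\<forall>v\<in>V. f v = Pos)"

text \<open>Pr[tau_conv >= T] = Pr[no f_t with t < T is all +1].\<close>
definition prob_tau_ge ::
  "'v set \<Rightarrow> ('v \<times> 'v) set \<Rightarrow> 'v \<Rightarrow> real \<Rightarrow> real \<Rightarrow> nat \<Rightarrow> real" where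
  "prob_tau_ge V E r a b T =
     measure_pmf.prob (traj V E r a b T) {xs. \<forall>t<T. \<not> all_pos V (xs ! t)}"

text \<open>Full binary tree of height h in heap numbering: vertices 1..2^(h+1)-1,
  root 1, children of v are 2v and 2v+1.\<close>
definition bt_vertices :: "nat \<Rightarrow> nat set" where
  "bt_vertices h = {1..2^(h+1) - 1}"

definition bt_edges :: "nat \<Rightarrow> (nat \<times> nat) set" where
  "bt_edges h = {(u, v). u \<in> bt_vertices h \<and> v \<in> bt_vertices h \<and>
                         (u = v div 2 \<or> v = u div 2) \<and> u \<noteq> v}"

end

theory Submission
  imports Defs
begin

text \<open>Let \<open>\<Phi>(f)\<close> be the number of \<open>-1\<close> labels weighted by degree. Labels spread one level
  per round, so in round \<open>h\<close> the \<open>2^h\<close> leaves are labelled, each copying its parent with a flip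
  with probability \<open>a\<close>: the expected potential is then at least \<open>a 2^h\<close>. From then on every
  vertex is labelled, and copying a uniformly random neighbour preserves \<open>E \<Phi>\<close> except at the
  root, which costs at most its degree \<open>2\<close> per round. Since \<open>\<Phi> \<le> 3n\<close> and \<open>\<Phi> = 0\<close> on the
  all-\<open>+1\<close> state, after \<open>k \<le> a n / 8\<close> further rounds the state is not all \<open>+1\<close> with
  probability at least \<open>(a 2^h - 2k) / 3n \<ge> a / 12\<close>; the all-\<open>+1\<close> state is absorbing, so this
  bounds the probability that the convergence time exceeds \<open>a n / 8\<close>.\<close>

section \<open>Trajectories and absorption\<close>

fun state_dist :: "'v set \<Rightarrow> ('v \<times> 'v) set \<Rightarrow> 'v \<Rightarrow> real \<Rightarrow> real \<Rightarrow> nat \<Rightarrow> 'v state pmf" where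
  "state_dist V E r a b 0 = return_pmf (init_state r)"
| "state_dist V E r a b (Suc t) = state_dist V E r a b t \<bind> step V E r a b"

lemma length_traj: "xs \<in> set_pmf (traj V E r a b k) \<Longrightarrow> length xs = Suc k"
  by (induction k arbitrary: xs) auto

lemma last_traj: "xs \<in> set_pmf (traj V E r a b k) \<Longrightarrow> last xs = xs ! k"
  using length_traj by (metis diff_Suc_1 last_conv_nth list.size(3) nat.distinct(1))

lemma map_last_traj: "map_pmf last (traj V E r a b k) = state_dist V E r a b k"
proof (induction k)
  case (Suc k)
  then show ?case by (simp add: map_bind_pmf map_pmf_comp bind_map_pmf flip: Suc.IH)
qed simp

lemma map_nth_traj:
  "j \<le> k \<Longrightarrow> map_pmf (\<lambda>xs. xs ! j) (traj V E r a b k) = state_dist V E r a b j"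
proof (induction k)
  case 0
  then show ?case by simp
next
  case (Suc k)
  show ?case
  proof (cases "j = Suc k")
    case True
    have "map_pmf (\<lambda>xs. xs ! j) (traj V E r a b (Suc k)) = map_pmf last (traj V E r a b (Suc k))"
    proof (rule map_pmf_cong[OF refl])
      fix xs assume "xs \<in> set_pmf (traj V E r a b (Suc k))"
      then show "xs ! j = last xs" using last_traj True by metis
    qed
    then show ?thesis using True by (simp only: map_last_traj)
  next
    case False
    with Suc.prems have "j \<le> k" by simp
    have "map_pmf (\<lambda>xs. xs ! j) (traj V E r a b (Suc k))
        = traj V E r a b k \<bind> (\<lambda>xs. map_pmf (\<lambda>s. (xs @ [s]) ! j) (step V E r a b (last xs)))"
      by (simp add: map_bind_pmf map_pmf_comp)
    also have "\<dots> = traj V E r a b k \<bind> (\<lambda>xs. return_pmf (xs ! j))"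
      using length_traj[of _ V E r a b k] \<open>j \<le> k\<close>
      by (intro bind_pmf_cong) (simp_all add: nth_append map_pmf_const)
    finally have "map_pmf (\<lambda>xs. xs ! j) (traj V E r a b (Suc k)) = map_pmf (\<lambda>xs. xs ! j) (traj V E r a b k)"
      by (simp add: map_pmf_def)
    then show ?thesis using Suc.IH[OF \<open>j \<le> k\<close>] by simp
  qed
qed

lemma neg_label_eq_Bot_iff [simp]: "neg_label x = Bot \<longleftrightarrow> x = Bot"
  by (cases x) auto

lemma finite_labelled_nbrs: "finite V \<Longrightarrow> finite (labelled_nbrs V E f v)"
  unfolding labelled_nbrs_def by simp

lemma set_pmf_vertex_update_labelled:
  assumes "finite V" "x \<in> set_pmf (vertex_update V E r a b f v)"
  shows "x \<noteq> Bot \<longleftrightarrow> v = r \<or> f v \<noteq> Bot \<or> labelled_nbrs V E f v \<noteq> {}"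
  using assms finite_labelled_nbrs[OF assms(1)]
  by (auto simp: vertex_update_def Let_def set_pmf_of_set labelled_nbrs_def eq_commute[of Bot]
      split: if_splits)

lemma set_pmf_vertex_update_Pos:
  assumes "finite V" "x \<in> set_pmf (vertex_update V E r a b f v)"
    and "f v = Pos" "\<forall>u\<in>labelled_nbrs V E f v. f u = Pos"
  shows "x = Pos"
  using assms finite_labelled_nbrs[OF assms(1)]
  by (auto simp: vertex_update_def Let_def set_pmf_of_set split: if_splits)

lemma set_pmf_step:
  assumes "finite V" "g \<in> set_pmf (step V E r a b f)" "v \<in> V"
  shows "g v \<in> set_pmf (vertex_update V E r a b f v)"
  using assms by (auto simp: step_def set_Pi_pmf PiE_dflt_def)

lemma set_pmf_step_outside:
  assumes "finite V" "g \<in> set_pmf (step V E r a b f)" "v \<notin> V"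
  shows "g v = Bot"
  using assms by (auto simp: step_def set_Pi_pmf PiE_dflt_def)

lemma all_pos_step:
  assumes "finite V" "all_pos V f" "g \<in> set_pmf (step V E r a b f)"
  shows "all_pos V g"
  using assms set_pmf_vertex_update_Pos[OF assms(1) set_pmf_step[OF assms(1,3)]]
  by (auto simp: all_pos_def labelled_nbrs_def)

lemma state_dist_root:
  assumes "finite V" "r \<in> V" "f \<in> set_pmf (state_dist V E r a b t)"
  shows "f r = Pos"
  using assms(3)
proof (induction t arbitrary: f)
  case (Suc t)
  then obtain f0 where "f \<in> set_pmf (step V E r a b f0)" by auto
  from set_pmf_step[OF assms(1) this assms(2)] show ?case
    by (simp add: vertex_update_def)
qed (simp add: init_state_def)

lemma nth_Suc_traj_in_step:
  "xs \<in> set_pmf (traj V E r a b k) \<Longrightarrow> i < k \<Longrightarrow> xs ! Suc i \<in> set_pmf (step V E r a b (xs ! i))"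
proof (induction k arbitrary: xs)
  case (Suc k)
  then obtain ys s where ys: "ys \<in> set_pmf (traj V E r a b k)"
    and s: "s \<in> set_pmf (step V E r a b (last ys))" and xs: "xs = ys @ [s]" by auto
  have len: "length ys = Suc k" using length_traj[OF ys] .
  show ?case
  proof (cases "i < k")
    case True
    then show ?thesis using Suc.IH[OF ys True] xs len by (simp add: nth_append)
  next
    case False
    then have "i = k" using Suc.prems(2) by simp
    then show ?thesis using s xs len last_traj[OF ys] by (simp add: nth_append)
  qed
qed simp

lemma all_pos_traj_mono:
  assumes "finite V" "xs \<in> set_pmf (traj V E r a b k)" "i \<le> j" "j \<le> k" "all_pos V (xs ! i)"
  shows "all_pos V (xs ! j)"
  using assms(3-5)
proof (induction j rule: dec_induct)
  case (step j)
  then show ?case using all_pos_step[OF assms(1) _ nth_Suc_traj_in_step[OF assms(2)]] by simp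
qed simp

lemma prob_not_all_pos_le_prob_tau_ge:
  assumes "finite V" "0 < T"
  shows "measure_pmf.prob (state_dist V E r a b (T - 1)) {f. \<not> all_pos V f} \<le> prob_tau_ge V E r a b T"
proof -
  have "measure_pmf.prob (state_dist V E r a b (T - 1)) {f. \<not> all_pos V f}
      = measure_pmf.prob (map_pmf (\<lambda>xs. xs ! (T - 1)) (traj V E r a b T)) {f. \<not> all_pos V f}"
    by (simp add: map_nth_traj)
  also have "\<dots> = measure_pmf.prob (traj V E r a b T) {xs. \<not> all_pos V (xs ! (T - 1))}"
    by (simp add: vimage_def)
  also have "\<dots> \<le> prob_tau_ge V E r a b T"
    unfolding prob_tau_ge_def
  proof (rule measure_pmf.finite_measure_mono_AE[OF AE_pmfI], safe)
    fix xs t assume "xs \<in> set_pmf (traj V E r a b T)" "\<not> all_pos V (xs ! (T - 1))" "t < T" "all_pos V (xs ! t)"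
    then show False using all_pos_traj_mono[OF assms(1), of xs E r a b T t "T - 1"] by fastforce
  qed simp
  finally show ?thesis .
qed

section \<open>A degree-weighted potential\<close>

definition nbrs :: "'v set \<Rightarrow> ('v \<times> 'v) set \<Rightarrow> 'v \<Rightarrow> 'v set" where
  "nbrs V E v = {u \<in> V. (u, v) \<in> E}"

text \<open>On fully labelled states the degree weighting makes this potential a martingale of the
  copy step, except at the root, which is pinned to \<open>Pos\<close> and so can only lower it.\<close>

definition neg_potential :: "'v set \<Rightarrow> ('v \<times> 'v) set \<Rightarrow> 'v state \<Rightarrow> real" where
  "neg_potential V E g = (\<Sum>v\<in>V. real (card (nbrs V E v)) * of_bool (g v = Neg))"

abbreviation degree_sum :: "'v set \<Rightarrow> ('v \<times> 'v) set \<Rightarrow> real" where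
  "degree_sum V E \<equiv> \<Sum>v\<in>V. real (card (nbrs V E v))"

definition frontier :: "'v set \<Rightarrow> ('v \<times> 'v) set \<Rightarrow> 'v \<Rightarrow> 'v state \<Rightarrow> 'v set" where
  "frontier V E r f = {v \<in> V. v \<noteq> r \<and> f v = Bot \<and> labelled_nbrs V E f v \<noteq> {}}"

lemma finite_nbrs: "finite V \<Longrightarrow> finite (nbrs V E v)"
  unfolding nbrs_def by simp

lemma labelled_nbrs_subset_nbrs: "labelled_nbrs V E f v \<subseteq> nbrs V E v"
  unfolding labelled_nbrs_def nbrs_def by blast

lemma labelled_nbrs_eq_nbrs: "\<forall>u\<in>V. f u \<noteq> Bot \<Longrightarrow> labelled_nbrs V E f v = nbrs V E v"
  unfolding labelled_nbrs_def nbrs_def by blast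

lemma sum_sum_nbrs:
  fixes F :: "'v \<Rightarrow> real"
  assumes "finite V" "sym E"
  shows "(\<Sum>v\<in>V. \<Sum>w\<in>nbrs V E v. F w) = (\<Sum>w\<in>V. real (card (nbrs V E w)) * F w)"
proof -
  have "(\<Sum>v\<in>V. \<Sum>w\<in>nbrs V E v. F w) = (\<Sum>v\<in>V. \<Sum>w\<in>V. if (w, v) \<in> E then F w else 0)"
    unfolding nbrs_def using assms(1) by (simp add: sum.inter_filter)
  also have "\<dots> = (\<Sum>w\<in>V. \<Sum>v\<in>V. if (w, v) \<in> E then F w else 0)"
    by (rule sum.swap)
  also have "\<dots> = (\<Sum>w\<in>V. \<Sum>v\<in>nbrs V E w. F w)"
  proof (rule sum.cong[OF refl])
    fix w
    have "{v \<in> V. (w, v) \<in> E} = nbrs V E w"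
      using assms(2) unfolding nbrs_def sym_def by blast
    then show "(\<Sum>v\<in>V. if (w, v) \<in> E then F w else 0) = (\<Sum>v\<in>nbrs V E w. F w)"
      using assms(1) by (simp flip: sum.inter_filter)
  qed
  also have "\<dots> = (\<Sum>w\<in>V. real (card (nbrs V E w)) * F w)"
    by simp
  finally show ?thesis .
qed

lemma neg_potential_nonneg: "0 \<le> neg_potential V E g"
  unfolding neg_potential_def by (simp add: sum_nonneg)

lemma neg_potential_le_degree_sum:
  "neg_potential V E g \<le> degree_sum V E * of_bool (\<not> all_pos V g)"
  unfolding neg_potential_def all_pos_def
  by (auto intro!: sum_mono)

lemma abs_neg_potential_le: "\<bar>neg_potential V E g\<bar> \<le> degree_sum V E"
  using neg_potential_le_degree_sum[of V E g] neg_potential_nonneg[of V E g]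
  by (cases "all_pos V g") (auto intro: sum_nonneg)

lemma integrable_neg_potential: "integrable (measure_pmf p) (neg_potential V E)"
  by (rule measure_pmf.integrable_const_bound[where B="degree_sum V E"]) (auto intro: abs_neg_potential_le)

lemma expectation_neg_potential_bounds:
  "0 \<le> measure_pmf.expectation p (neg_potential V E)"
  "measure_pmf.expectation p (neg_potential V E) \<le> degree_sum V E"
  using abs_neg_potential_le[of V E] neg_potential_nonneg[of V E]
  by (auto intro!: integral_nonneg_AE measure_pmf.integral_le_const integrable_neg_potential AE_pmfI
      simp: abs_le_iff)

lemma expectation_neg_potential_le_prob:
  "measure_pmf.expectation p (neg_potential V E) \<le> degree_sum V E * measure_pmf.prob p {g. \<not> all_pos V g}"
proof -
  have "measure_pmf.expectation p (neg_potential V E)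
      \<le> measure_pmf.expectation p (\<lambda>g. degree_sum V E * indicator {g. \<not> all_pos V g} g)"
    by (intro integral_mono integrable_neg_potential measure_pmf.integrable_const_bound[where B="\<bar>degree_sum V E\<bar>"])
       (use neg_potential_le_degree_sum[of V E] in \<open>auto simp: indicator_def\<close>)
  then show ?thesis by simp
qed

lemma expectation_neg_potential_step:
  assumes "finite V"
  shows "measure_pmf.expectation (step V E r a b f) (neg_potential V E)
       = (\<Sum>v\<in>V. real (card (nbrs V E v)) * pmf (vertex_update V E r a b f v) Neg)"
proof -
  have "measure_pmf.expectation (step V E r a b f) (\<lambda>g. of_bool (g v = Neg))
      = pmf (vertex_update V E r a b f v) Neg" if "v \<in> V" for v
  proof -
    have "map_pmf (\<lambda>g. g v) (step V E r a b f) = vertex_update V E r a b f v"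
      unfolding step_def using assms that by (simp add: Pi_pmf_component)
    moreover have "(\<lambda>g. of_bool (g v = Neg)) = (indicator {g. g v = Neg} :: _ \<Rightarrow> real)"
      by (auto simp: indicator_def)
    moreover have "measure_pmf.prob (step V E r a b f) {g. g v = Neg}
        = measure_pmf.prob (map_pmf (\<lambda>g. g v) (step V E r a b f)) {Neg}"
      by (simp add: vimage_def)
    ultimately show ?thesis
      by (simp add: measure_pmf_single)
  qed
  then show ?thesis
    unfolding neg_potential_def
    by (subst Bochner_Integration.integral_sum)
       (auto intro!: sum.cong measure_pmf.integrable_const_bound[where B=1])
qed

lemma pmf_vertex_update_copy:
  fixes E :: "('v \<times> 'v) set"
  assumes "finite V" "v \<noteq> r" "f v \<noteq> Bot" "0 \<le> b" "b \<le> 1"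
  defines "N \<equiv> labelled_nbrs V E f v"
  shows "real (card N) * pmf (vertex_update V E r a b f v) Neg
       = (1 - b) * real (card N) * of_bool (f v = Neg) + b * (\<Sum>w\<in>N. of_bool (f w = Neg))"
proof (cases "N = {}")
  case False
  have "finite N" unfolding N_def using finite_labelled_nbrs[OF assms(1)] .
  then have "pmf (vertex_update V E r a b f v) Neg
      = (\<Sum>w\<in>N. b * of_bool (f w = Neg) + (1 - b) * of_bool (f v = Neg)) / real (card N)"
    using assms False unfolding vertex_update_def Let_def N_def
    by (simp add: pmf_bind integral_pmf_of_set indicator_def mult.commute)
  then have "real (card N) * pmf (vertex_update V E r a b f v) Neg
      = (\<Sum>w\<in>N. b * of_bool (f w = Neg) + (1 - b) * of_bool (f v = Neg))"
    using False \<open>finite N\<close> by simp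
  then show ?thesis
    unfolding sum.distrib sum_distrib_left[symmetric] by (simp add: mult_ac)
qed (simp add: N_def)

lemma pmf_vertex_update_fresh_ge:
  assumes "finite V" "v \<noteq> r" "f v = Bot" "labelled_nbrs V E f v \<noteq> {}" "0 \<le> a" "a \<le> 1/2"
  shows "a \<le> pmf (vertex_update V E r a b f v) Neg"
proof -
  let ?N = "labelled_nbrs V E f v"
  let ?q = "\<lambda>w. a * of_bool (neg_label (f w) = Neg) + (1 - a) * of_bool (f w = Neg)"
  have fin: "finite ?N" using finite_labelled_nbrs[OF assms(1)] .
  have pos: "0 < card ?N" using assms(4) fin by (simp add: card_gt_0_iff)
  have q: "a \<le> ?q w" if "w \<in> ?N" for w
    using that assms(5,6) by (cases "f w") (auto simp: labelled_nbrs_def)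
  have "pmf (vertex_update V E r a b f v) Neg = (\<Sum>w\<in>?N. ?q w) / real (card ?N)"
    using assms fin unfolding vertex_update_def Let_def
    by (simp add: pmf_bind integral_pmf_of_set indicator_def mult.commute)
  then have "real (card ?N) * pmf (vertex_update V E r a b f v) Neg = (\<Sum>w\<in>?N. ?q w)"
    using pos by simp
  moreover have "real (card ?N) * a \<le> (\<Sum>w\<in>?N. ?q w)"
    using sum_mono[OF q] by simp
  ultimately have "real (card ?N) * a \<le> real (card ?N) * pmf (vertex_update V E r a b f v) Neg"
    by simp
  then show ?thesis using pos by simp
qed

lemma expectation_neg_potential_step_ge:
  assumes "finite V" "sym E" "r \<in> V" "\<forall>v\<in>V. f v \<noteq> Bot" "f r = Pos" "0 \<le> b" "b \<le> 1"
  shows "neg_potential V E f - real (card (nbrs V E r))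
       \<le> measure_pmf.expectation (step V E r a b f) (neg_potential V E)"
proof -
  define neg_nbrs where "neg_nbrs v = (\<Sum>w\<in>nbrs V E v. of_bool (f w = Neg) :: real)" for v
  define G where "G v = (1 - b) * real (card (nbrs V E v)) * of_bool (f v = Neg) + b * neg_nbrs v" for v
  have weighted_pmf: "real (card (nbrs V E v)) * pmf (vertex_update V E r a b f v) Neg
      = G v - (if v = r then b * neg_nbrs r else 0)" if "v \<in> V" for v
  proof (cases "v = r")
    case True
    then show ?thesis using assms(5) by (simp add: vertex_update_def G_def)
  next
    case False
    then show ?thesis
      using pmf_vertex_update_copy[OF assms(1) False _ assms(6,7), of f E a] assms(4) that
      by (simp add: labelled_nbrs_eq_nbrs G_def neg_nbrs_def)
  qed
  have "(\<Sum>v\<in>V. neg_nbrs v) = neg_potential V E f"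
    unfolding neg_nbrs_def neg_potential_def by (rule sum_sum_nbrs[OF assms(1,2)])
  moreover have "(\<Sum>v\<in>V. G v)
      = (1 - b) * (\<Sum>v\<in>V. real (card (nbrs V E v)) * of_bool (f v = Neg)) + b * (\<Sum>v\<in>V. neg_nbrs v)"
    unfolding G_def by (simp only: sum.distrib sum_distrib_left mult.assoc)
  ultimately have "(\<Sum>v\<in>V. G v) = neg_potential V E f"
    unfolding neg_potential_def by (simp add: left_diff_distrib)
  then have "measure_pmf.expectation (step V E r a b f) (neg_potential V E) = neg_potential V E f - b * neg_nbrs r"
    using assms(1,3) by (simp add: expectation_neg_potential_step weighted_pmf sum_subtractf sum.delta)
  moreover have "b * neg_nbrs r \<le> real (card (nbrs V E r))"
  proof -
    have "neg_nbrs r \<le> real (card (nbrs V E r))"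
      unfolding neg_nbrs_def using sum_mono[of "nbrs V E r" "\<lambda>w. of_bool (f w = Neg) :: real" "\<lambda>_. 1"] by simp
    moreover have "0 \<le> neg_nbrs r" unfolding neg_nbrs_def by (simp add: sum_nonneg)
    ultimately show ?thesis using assms(6,7) by (meson mult_left_le_one_le order_trans)
  qed
  ultimately show ?thesis by simp
qed

lemma expectation_neg_potential_step_frontier:
  assumes "finite V" "0 \<le> a" "a \<le> 1/2"
  shows "a * real (card (frontier V E r f))
       \<le> measure_pmf.expectation (step V E r a b f) (neg_potential V E)"
proof -
  let ?F = "frontier V E r f"
  let ?T = "\<lambda>v. real (card (nbrs V E v)) * pmf (vertex_update V E r a b f v) Neg"
  have "a \<le> ?T v" if "v \<in> ?F" for v
  proof -
    have "labelled_nbrs V E f v \<noteq> {}" using that by (simp add: frontier_def)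
    then have "nbrs V E v \<noteq> {}" using labelled_nbrs_subset_nbrs[of V E f v] by blast
    then have "1 \<le> real (card (nbrs V E v))"
      using finite_nbrs[OF assms(1)] by (simp add: Suc_le_eq card_gt_0_iff)
    from mult_right_mono[OF this pmf_nonneg]
    have "pmf (vertex_update V E r a b f v) Neg \<le> ?T v" by simp
    moreover have "a \<le> pmf (vertex_update V E r a b f v) Neg"
      using that pmf_vertex_update_fresh_ge[OF assms(1) _ _ _ assms(2,3)] by (auto simp: frontier_def)
    ultimately show ?thesis by linarith
  qed
  then have "a * real (card ?F) \<le> (\<Sum>v\<in>?F. ?T v)"
    using sum_mono[of ?F "\<lambda>_. a" ?T] by (simp add: mult.commute)
  also have "\<dots> \<le> (\<Sum>v\<in>V. ?T v)"
    using assms(1) by (intro sum_mono2) (auto simp: frontier_def)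
  finally show ?thesis using assms(1) by (simp add: expectation_neg_potential_step)
qed

lemma expectation_bind_pmf:
  fixes F :: "'b \<Rightarrow> real"
  assumes "\<And>y. \<bar>F y\<bar> \<le> B"
  shows "measure_pmf.expectation (M \<bind> N) F = measure_pmf.expectation M (\<lambda>x. measure_pmf.expectation (N x) F)"
  unfolding measure_pmf_bind
  by (rule integral_bind[where B=B and B'=1 and K="count_space UNIV"])
     (auto simp: assms measure_subprob measure_pmf.prob_space_axioms prob_space_imp_subprob_space
        intro!: measure_pmf.finite_measure)

lemma expectation_neg_potential_state_dist_Suc:
  "measure_pmf.expectation (state_dist V E r a b (Suc t)) (neg_potential V E)
   = measure_pmf.expectation (state_dist V E r a b t)
       (\<lambda>f. measure_pmf.expectation (step V E r a b f) (neg_potential V E))"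
  by (simp add: expectation_bind_pmf[OF abs_neg_potential_le])

lemma integrable_expectation_neg_potential_step:
  "integrable (measure_pmf p) (\<lambda>f. measure_pmf.expectation (step V E r a b f) (neg_potential V E))"
  using expectation_neg_potential_bounds[of _ V E]
  by (intro measure_pmf.integrable_const_bound[where B="degree_sum V E"]) (auto simp: abs_le_iff)

lemma expectation_neg_potential_state_dist_ge:
  assumes "finite V" "sym E" "r \<in> V" "0 \<le> b" "b \<le> 1"
    and labelled: "\<And>t f. t0 \<le> t \<Longrightarrow> f \<in> set_pmf (state_dist V E r a b t) \<Longrightarrow> \<forall>v\<in>V. f v \<noteq> Bot"
  shows "measure_pmf.expectation (state_dist V E r a b t0) (neg_potential V E) - real k * card (nbrs V E r)
       \<le> measure_pmf.expectation (state_dist V E r a b (t0 + k)) (neg_potential V E)"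
proof (induction k)
  case (Suc k)
  let ?S = "state_dist V E r a b (t0 + k)"
  have "measure_pmf.expectation ?S (neg_potential V E) - real (card (nbrs V E r))
      = measure_pmf.expectation ?S (\<lambda>f. neg_potential V E f - real (card (nbrs V E r)))"
    by (simp add: integrable_neg_potential)
  also have "\<dots> \<le> measure_pmf.expectation ?S (\<lambda>f. measure_pmf.expectation (step V E r a b f) (neg_potential V E))"
  proof (intro integral_mono_AE AE_pmfI integrable_expectation_neg_potential_step)
    fix f assume "f \<in> set_pmf ?S"
    then show "neg_potential V E f - real (card (nbrs V E r))
        \<le> measure_pmf.expectation (step V E r a b f) (neg_potential V E)"
      using labelled[of "t0 + k" f] state_dist_root[OF assms(1,3)]
      by (intro expectation_neg_potential_step_ge[OF assms(1-3) _ _ assms(4,5)]) auto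
  qed (simp add: integrable_neg_potential)
  also have "\<dots> = measure_pmf.expectation (state_dist V E r a b (t0 + Suc k)) (neg_potential V E)"
    by (simp only: add_Suc_right expectation_neg_potential_state_dist_Suc)
  finally show ?case
    using Suc.IH by (simp add: algebra_simps)
qed simp

section \<open>The full binary tree\<close>

lemma finite_bt_vertices: "finite (bt_vertices h)"
  unfolding bt_vertices_def by simp

lemma card_bt_vertices: "card (bt_vertices h) = 2 ^ (h + 1) - 1"
  unfolding bt_vertices_def by simp

lemma one_in_bt_vertices: "1 \<in> bt_vertices h"
proof -
  have "(2::nat) \<le> 2 ^ (h + 1)"
    using power_increasing[of 1 "h + 1" "2::nat"] by simp
  then show ?thesis unfolding bt_vertices_def atLeastAtMost_iff by arith
qed

lemma sym_bt_edges: "sym (bt_edges h)"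
  unfolding bt_edges_def sym_def by auto

lemma nbrs_bt_subset: "nbrs (bt_vertices h) (bt_edges h) v \<subseteq> {v div 2, 2 * v, 2 * v + 1}"
  unfolding nbrs_def bt_edges_def by auto

lemma card_nbrs_bt_le: "card (nbrs (bt_vertices h) (bt_edges h) v) \<le> 3"
proof -
  have "card (nbrs (bt_vertices h) (bt_edges h) v) \<le> card {v div 2, 2 * v, 2 * v + 1}"
    by (intro card_mono nbrs_bt_subset) simp
  also have "\<dots> \<le> 3"
    by (simp add: card_insert_if)
  finally show ?thesis .
qed

lemma card_nbrs_bt_root: "card (nbrs (bt_vertices h) (bt_edges h) 1) \<le> 2"
proof -
  have "nbrs (bt_vertices h) (bt_edges h) 1 \<subseteq> {2, 3}"
    unfolding nbrs_def bt_edges_def bt_vertices_def by auto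
  from card_mono[OF _ this] show ?thesis by simp
qed

lemma degree_sum_bt_le: "degree_sum (bt_vertices h) (bt_edges h) \<le> 3 * real (card (bt_vertices h))"
  using sum_mono[of "bt_vertices h" "\<lambda>v. real (card (nbrs (bt_vertices h) (bt_edges h) v))" "\<lambda>_. 3"]
    card_nbrs_bt_le by simp

lemma bt_has_nbr_below_iff:
  assumes "v \<in> bt_vertices h" "v \<noteq> 1"
  shows "(\<exists>u\<in>nbrs (bt_vertices h) (bt_edges h) v. u < m) \<longleftrightarrow> v < 2 * m"
proof
  assume "\<exists>u\<in>nbrs (bt_vertices h) (bt_edges h) v. u < m"
  then show "v < 2 * m"
    unfolding nbrs_def bt_edges_def by auto
next
  assume "v < 2 * m"
  moreover have "v div 2 \<in> nbrs (bt_vertices h) (bt_edges h) v"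
    using assms unfolding nbrs_def bt_edges_def bt_vertices_def by auto
  ultimately show "\<exists>u\<in>nbrs (bt_vertices h) (bt_edges h) v. u < m"
    by (intro bexI[of _ "v div 2"]) auto
qed

lemma set_pmf_state_dist_bt:
  assumes "f \<in> set_pmf (state_dist (bt_vertices h) (bt_edges h) 1 a b t)"
  shows "f v \<noteq> Bot \<longleftrightarrow> v \<in> bt_vertices h \<and> v < 2 ^ (t + 1)"
  using assms
proof (induction t arbitrary: f v)
  case 0
  then show ?case using one_in_bt_vertices[of h] by (auto simp: init_state_def bt_vertices_def)
next
  case (Suc t)
  let ?V = "bt_vertices h" and ?E = "bt_edges h"
  from Suc.prems obtain f0 where f0: "f0 \<in> set_pmf (state_dist ?V ?E 1 a b t)"
    and f: "f \<in> set_pmf (step ?V ?E 1 a b f0)" by auto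
  show ?case
  proof (cases "v \<in> ?V")
    case False
    then show ?thesis using set_pmf_step_outside[OF finite_bt_vertices f] by simp
  next
    case True
    have "labelled_nbrs ?V ?E f0 v = {u \<in> nbrs ?V ?E v. u < 2 ^ (t + 1)}"
      using Suc.IH[OF f0] unfolding labelled_nbrs_def nbrs_def by auto
    then have "labelled_nbrs ?V ?E f0 v \<noteq> {} \<longleftrightarrow> v < 2 ^ (Suc t + 1)" if "v \<noteq> 1"
      using bt_has_nbr_below_iff[OF True that, of "2 ^ (t + 1)"] by auto
    moreover have "f0 v \<noteq> Bot \<longrightarrow> v < 2 ^ (Suc t + 1)"
    proof
      assume "f0 v \<noteq> Bot"
      then have "v < 2 ^ (t + 1)" using Suc.IH[OF f0] by blast
      also have "\<dots> \<le> 2 ^ (Suc t + 1)" by (rule power_increasing) simp_all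
      finally show "v < 2 ^ (Suc t + 1)" .
    qed
    moreover have "(1::nat) < 2 ^ (Suc t + 1)"
      using one_less_power[of "2::nat" "Suc t + 1"] by simp
    ultimately show ?thesis
      using set_pmf_vertex_update_labelled[OF finite_bt_vertices set_pmf_step[OF finite_bt_vertices f True]] True
      by auto
  qed
qed

lemma state_dist_bt_all_labelled:
  assumes "f \<in> set_pmf (state_dist (bt_vertices h) (bt_edges h) 1 a b t)" "h \<le> t" "v \<in> bt_vertices h"
  shows "f v \<noteq> Bot"
proof -
  have "v < 2 ^ (h + 1)" using assms(3) unfolding bt_vertices_def by auto
  also have "\<dots> \<le> 2 ^ (t + 1)" using assms(2) by (intro power_increasing) simp_all
  finally show ?thesis using set_pmf_state_dist_bt[OF assms(1)] assms(3) by blast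
qed

lemma bt_leaves_subset_frontier:
  assumes "1 \<le> h" and labelled: "\<And>u. f u \<noteq> Bot \<longleftrightarrow> u \<in> bt_vertices h \<and> u < 2 ^ h"
  shows "{2 ^ h..<2 ^ (h + 1)} \<subseteq> frontier (bt_vertices h) (bt_edges h) 1 f"
proof
  let ?V = "bt_vertices h" and ?E = "bt_edges h"
  fix v :: nat assume "v \<in> {2 ^ h..<2 ^ (h + 1)}"
  then have v_ge: "2 ^ h \<le> v" and v_lt: "v < 2 * 2 ^ h" by simp_all
  have "(2::nat) \<le> 2 ^ h" using power_increasing[OF assms(1), of "2::nat"] by simp
  with v_ge v_lt have vV: "v \<in> ?V" and "v \<noteq> 1"
    unfolding bt_vertices_def by simp_all
  moreover have "f v = Bot" using labelled[of v] v_ge by simp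
  moreover have "labelled_nbrs ?V ?E f v = {u \<in> nbrs ?V ?E v. u < 2 ^ h}"
    using labelled unfolding labelled_nbrs_def nbrs_def by blast
  then have "labelled_nbrs ?V ?E f v \<noteq> {}"
    using bt_has_nbr_below_iff[OF vV \<open>v \<noteq> 1\<close>, of "2 ^ h"] v_lt by auto
  ultimately show "v \<in> frontier ?V ?E 1 f"
    by (simp add: frontier_def)
qed

lemma expectation_neg_potential_bt_height_ge:
  assumes "0 \<le> a" "a \<le> 1/2" "1 \<le> h"
  shows "a * 2 ^ h \<le> measure_pmf.expectation (state_dist (bt_vertices h) (bt_edges h) 1 a b h)
                         (neg_potential (bt_vertices h) (bt_edges h))"
proof -
  let ?V = "bt_vertices h" and ?E = "bt_edges h"
  have "a * 2 ^ h \<le> measure_pmf.expectation (step ?V ?E 1 a b f) (neg_potential ?V ?E)"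
    if f: "f \<in> set_pmf (state_dist ?V ?E 1 a b (h - 1))" for f
  proof -
    have "{2 ^ h..<2 ^ (h + 1)} \<subseteq> frontier ?V ?E 1 f"
      using set_pmf_state_dist_bt[OF f] assms(3) by (intro bt_leaves_subset_frontier) simp_all
    then have "a * 2 ^ h \<le> a * real (card (frontier ?V ?E 1 f))"
      using card_mono[OF _ \<open>_ \<subseteq> frontier ?V ?E 1 f\<close>] finite_bt_vertices assms(1)
      by (intro mult_left_mono) (simp_all add: frontier_def)
    also have "\<dots> \<le> measure_pmf.expectation (step ?V ?E 1 a b f) (neg_potential ?V ?E)"
      by (rule expectation_neg_potential_step_frontier[OF finite_bt_vertices assms(1,2)])
    finally show ?thesis .
  qed
  then have "a * 2 ^ h \<le> measure_pmf.expectation (state_dist ?V ?E 1 a b (h - 1))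
               (\<lambda>f. measure_pmf.expectation (step ?V ?E 1 a b f) (neg_potential ?V ?E))"
    by (rule measure_pmf.integral_ge_const[OF integrable_expectation_neg_potential_step AE_pmfI])
  also have "\<dots> = measure_pmf.expectation (state_dist ?V ?E 1 a b h) (neg_potential ?V ?E)"
    using assms(3) expectation_neg_potential_state_dist_Suc[of ?V ?E 1 a b "h - 1"] by simp
  finally show ?thesis .
qed

text \<open>Before round \<open>h\<close> the leaves are still unlabelled.\<close>

lemma prob_not_all_pos_bt_before_height:
  assumes "m < h"
  shows "measure_pmf.prob (state_dist (bt_vertices h) (bt_edges h) 1 a b m) {f. \<not> all_pos (bt_vertices h) f} = 1"
proof -
  let ?V = "bt_vertices h" and ?S = "state_dist (bt_vertices h) (bt_edges h) 1 a b m"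
  have "2 ^ (h + 1) - 1 \<in> ?V" "\<not> 2 ^ (h + 1) - 1 < (2::nat) ^ (m + 1)"
    using assms power_increasing[of "m + 1" h "2::nat"] one_in_bt_vertices[of h]
    unfolding bt_vertices_def by auto
  then have "AE f in ?S. f \<in> {f. \<not> all_pos ?V f}"
    using set_pmf_state_dist_bt by (fastforce simp: all_pos_def AE_measure_pmf_iff)
  then show ?thesis using measure_pmf.prob_eq_1[of "{f. \<not> all_pos ?V f}" ?S] by simp
qed

lemma prob_not_all_pos_bt_ge:
  assumes "0 < a" "a < 1/2" "0 < b" "b < 1" "1 \<le> h"
    and m: "real m \<le> a / 8 * real (2 ^ (h + 1) - 1 :: nat)"
  shows "a / 12 \<le> measure_pmf.prob (state_dist (bt_vertices h) (bt_edges h) 1 a b m)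
                     {f. \<not> all_pos (bt_vertices h) f}"
proof -
  let ?V = "bt_vertices h" and ?E = "bt_edges h"
  let ?S = "state_dist ?V ?E 1 a b"
  let ?P = "measure_pmf.prob (?S m) {f. \<not> all_pos ?V f}"
  let ?n = "real (card ?V)"
  have n: "?n = 2 * 2 ^ h - 1"
    unfolding card_bt_vertices by (simp add: of_nat_diff)
  show ?thesis
  proof (cases "m < h")
    case True
    then show ?thesis using prob_not_all_pos_bt_before_height[OF True] assms(2) by simp
  next
    case False
    then obtain k where k: "m = h + k" using le_Suc_ex not_less by blast
    have "real k * card (nbrs ?V ?E 1) \<le> 2 * real k"
      using mult_left_mono[of "real (card (nbrs ?V ?E 1))" 2 "real k"] card_nbrs_bt_root[of h] by simp
    then have "a * 2 ^ h - 2 * real k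
        \<le> measure_pmf.expectation (?S h) (neg_potential ?V ?E) - real k * card (nbrs ?V ?E 1)"
      using expectation_neg_potential_bt_height_ge[of a h b] assms by linarith
    also have "\<dots> \<le> measure_pmf.expectation (?S m) (neg_potential ?V ?E)"
      unfolding k using assms(3,4) state_dist_bt_all_labelled
      by (intro expectation_neg_potential_state_dist_ge finite_bt_vertices sym_bt_edges one_in_bt_vertices) auto
    also have "\<dots> \<le> degree_sum ?V ?E * ?P"
      by (rule expectation_neg_potential_le_prob)
    also have "\<dots> \<le> 3 * ?n * ?P"
      by (intro mult_right_mono degree_sum_bt_le measure_nonneg)
    finally have "a * 2 ^ h - 2 * real k \<le> 3 * (2 * 2 ^ h - 1) * ?P"
      unfolding n .
    moreover have "2 * real k \<le> a / 2 * 2 ^ h"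
      using m k assms(1) by (simp add: of_nat_diff field_simps)
    moreover have "3 * (2 * 2 ^ h - 1) * ?P \<le> 6 * 2 ^ h * ?P"
      by (intro mult_right_mono measure_nonneg) simp
    ultimately have "a / 2 * 2 ^ h \<le> 6 * 2 ^ h * ?P"
      by linarith
    then show ?thesis by (simp add: field_simps)
  qed
qed

theorem mainTheorem18:
  fixes a b :: real
  assumes "0 < a" "a < 1/2" "0 < b" "b < 1"
  shows "\<exists>c1 > 0. \<exists>c2 > 0. \<exists>h0. \<forall>h \<ge> h0.
           prob_tau_ge (bt_vertices h) (bt_edges h) 1 a b
              (nat \<lceil>c2 * real (2^(h+1) - 1 :: nat)\<rceil>) \<ge> c1 * a"
proof (intro exI[of _ "1/12"], intro conjI exI[of _ "a/8"] exI[of _ "1::nat"] allI impI)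
  fix h :: nat assume "1 \<le> h"
  let ?n = "real (2^(h+1) - 1 :: nat)"
  let ?T = "nat \<lceil>a / 8 * ?n\<rceil>"
  have "1 \<le> 2^(h+1) - (1::nat)"
    using one_in_bt_vertices[of h] unfolding bt_vertices_def atLeastAtMost_iff by (elim conjE)
  then have "0 < ?n" by (metis of_nat_0_less_iff less_le_trans zero_less_one)
  then have "0 < a / 8 * ?n" using assms(1) by simp
  then have T: "0 < ?T" and "real ?T < a / 8 * ?n + 1" by linarith+
  then have "real (?T - 1) \<le> a / 8 * ?n" by (simp add: of_nat_diff)
  from prob_not_all_pos_bt_ge[OF assms \<open>1 \<le> h\<close> this]
  show "1/12 * a \<le> prob_tau_ge (bt_vertices h) (bt_edges h) 1 a b ?T"
    using prob_not_all_pos_le_prob_tau_ge[OF finite_bt_vertices[of h] T, where E="bt_edges h" and r=1 and a=a and b=b]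
    by simp
qed (use assms in simp_all)

end
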